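(* Let $C=(1,2,3,c_4,c_4+1,2c_4)$ with $c_4>4$. Then $C$ is canonical and the subsystem $(1,2,3,c_4,c_4+1)$ is noncanonical.
   Context: A system is a tuple $C=(c_1,\dots,c_n)$ of integers with $1=c_1<c_2<\dots<c_n$; for $k\le n$, $(c_1,\dots,c_k)$ is a subsystem. For a positive integer $v$, $\mathrm{opt}_C(v)$ is the minimum of $\sum_i x_i$ over $x\in\mathbb{Z}_{\ge0}^n$ with $\sum_i c_ix_i=v$. The greedy representation of $v$ is produced by: for $i=n$ down to $1$, while $c_i\le$ remaining value, take a coin $c_i$. $\mathrm{grd}_C(v)$ is its number of coins. A positive integer $w$ is a counterexample if $\mathrm{opt}_C(w)<\mathrm{grd}_C(w)$; $C$ is canonical if it has none, noncanonical otherwise. *)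

theory Defs
  imports Main
begin

definition is_system :: "nat list \<Rightarrow> bool" where
  "is_system C \<longleftrightarrow> C \<noteq> [] \<and> hd C = 1 \<and> sorted_wrt (<) C"

definition represents :: "nat list \<Rightarrow> nat \<Rightarrow> nat list \<Rightarrow> bool" where
  "represents C v x \<longleftrightarrow> length x = length C \<and> (\<Sum>i<length C. C ! i * x ! i) = v"

definition opt :: "nat list \<Rightarrow> nat \<Rightarrow> nat" where
  "opt C v = (LEAST k. \<exists>x. represents C v x \<and> sum_list x = k)"

text \<open>Greedy coin count, processing coins in the given (descending) order:
  taking coin c while c <= remaining value takes exactly (v div c) coins.\<close>
fun grd_desc :: "nat list \<Rightarrow> nat \<Rightarrow> nat" where
  "grd_desc [] v = 0"
| "grd_desc (c # cs) v = v div c + grd_desc cs (v mod c)"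

definition grd :: "nat list \<Rightarrow> nat \<Rightarrow> nat" where
  "grd C v = grd_desc (rev C) v"

definition counterexample :: "nat list \<Rightarrow> nat \<Rightarrow> bool" where
  "counterexample C w \<longleftrightarrow> 0 < w \<and> opt C w < grd C w"

definition canonical :: "nat list \<Rightarrow> bool" where
  "canonical C \<longleftrightarrow> (\<forall>w. \<not> counterexample C w)"

definition noncanonical :: "nat list \<Rightarrow> bool" where
  "noncanonical C \<longleftrightarrow> \<not> canonical C"

end

theory Submission
  imports Defs
begin

text \<open>If the greedy count g of a system satisfies g (w + c) \<le> g w + 1 for every coin c, then,
  since g 0 = 0, adding the coins of any representation of v one at a time gives g v \<le> opt v.
  For C = (1, 2, 3, c, c + 1, 2c) we have g w = w div 2c + g' (w mod 2c), where g' is the greedy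
  count of (1, 2, 3, c, c + 1), which has a closed form below 2c; so the step inequality reduces
  to a case check on residues. Without the coin 2c, greedy pays 2c as (c + 1) + (c - 1), using
  1 + (c + 1) div 3 \<ge> 3 coins instead of the two coins c + c.\<close>

lemma opt_le: "represents C v x \<Longrightarrow> opt C v \<le> sum_list x"
  unfolding opt_def by (rule Least_le) blast

lemma opt_attained:
  "represents C v x \<Longrightarrow> \<exists>y. represents C v y \<and> sum_list y = opt C v"
  unfolding opt_def by (rule LeastI_ex) blast

lemma represents_ones:
  assumes "is_system C"
  shows "represents C v (v # replicate (length C - 1) 0)"
proof -
  obtain cs where "C = 1 # cs"
    using assms unfolding is_system_def by (cases C) auto
  then show ?thesis
    by (simp add: represents_def sum.lessThan_Suc_shift del: sum.lessThan_Suc)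
qed

lemma grd_desc_zero: "grd_desc cs 0 = 0"
  by (induction cs) simp_all

lemma grd_zero: "grd C 0 = 0"
  by (simp add: grd_def grd_desc_zero)

lemma grd_snoc: "grd (C @ [m]) w = w div m + grd C (w mod m)"
  by (simp add: grd_def)

lemma grd_snoc_add:
  "grd (C @ [m]) (w + d) = w div m + grd (C @ [m]) (w mod m + d)"
proof -
  have "(w + d) div m = w div m + (w mod m + d) div m"
    by (simp add: div_add1_eq[of w d] div_add1_eq[of "w mod m" d])
  moreover have "(w + d) mod m = (w mod m + d) mod m"
    by (simp add: mod_add_left_eq)
  ultimately show ?thesis
    by (simp add: grd_snoc)
qed

lemma coin_step_bound_multiple:
  fixes f :: "nat \<Rightarrow> nat"
  assumes "\<And>w. f (w + c) \<le> f w + 1"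
  shows "f (w + k * c) \<le> f w + k"
proof (induction k)
  case 0
  then show ?case by simp
next
  case (Suc k)
  have "f (w + Suc k * c) = f ((w + k * c) + c)"
    by (simp add: algebra_simps)
  also have "\<dots> \<le> f (w + k * c) + 1"
    by (rule assms)
  finally show ?case
    using Suc.IH by simp
qed

lemma coin_step_bound_represents:
  fixes f :: "nat \<Rightarrow> nat"
  assumes "\<And>w c. c \<in> set C \<Longrightarrow> f (w + c) \<le> f w + 1" and "length x = length C"
  shows "f (w + (\<Sum>i<length C. C ! i * x ! i)) \<le> f w + sum_list x"
  using assms
proof (induction C arbitrary: x w)
  case Nil
  then show ?case by simp
next
  case (Cons c C)
  obtain a xs where x: "x = a # xs" and len: "length xs = length C"
    using Cons.prems(2) by (cases x) auto
  have "f (w + (\<Sum>i<length (c # C). (c # C) ! i * x ! i))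
      = f ((w + a * c) + (\<Sum>i<length C. C ! i * xs ! i))"
    by (simp add: x sum.lessThan_Suc_shift algebra_simps del: sum.lessThan_Suc)
  also have "\<dots> \<le> f (w + a * c) + sum_list xs"
    using Cons.IH[OF _ len] Cons.prems(1) by simp
  also have "\<dots> \<le> f w + a + sum_list xs"
    using coin_step_bound_multiple[of f c w a] Cons.prems(1) by simp
  finally show ?case
    by (simp add: x)
qed

lemma canonical_if_grd_coin_step:
  assumes "is_system C" and step: "\<And>w c. c \<in> set C \<Longrightarrow> grd C (w + c) \<le> grd C w + 1"
  shows "canonical C"
  unfolding canonical_def counterexample_def
proof (intro allI notI)
  fix v
  assume counter: "0 < v \<and> opt C v < grd C v"
  obtain x where x: "represents C v x" "sum_list x = opt C v"
    using opt_attained[OF represents_ones[OF assms(1)]] by blast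
  then have "length x = length C" "(\<Sum>i<length C. C ! i * x ! i) = v"
    unfolding represents_def by simp_all
  then have "grd C v \<le> sum_list x"
    using coin_step_bound_represents[of C "grd C" x 0] step by (simp add: grd_zero)
  with x(2) counter show False
    by simp
qed

lemma noncanonical_if_represents:
  assumes "represents C w x" "0 < w" "sum_list x < grd C w"
  shows "noncanonical C"
proof -
  have "counterexample C w"
    unfolding counterexample_def using assms opt_le[OF assms(1)] by simp
  then show ?thesis
    unfolding noncanonical_def canonical_def by blast
qed

lemma grd_coin_step_from_residues:
  assumes "\<And>r. r < m \<Longrightarrow> grd (C @ [m]) (r + d) \<le> grd (C @ [m]) r + 1" and "0 < m"
  shows "grd (C @ [m]) (w + d) \<le> grd (C @ [m]) w + 1"
  using grd_snoc_add[of C m w d] grd_snoc_add[of C m w 0] assms(1)[of "w mod m"] assms(2)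
  by simp

lemma grd_1_2_3: "grd [1, 2, 3] r = (r + 2) div 3"
proof -
  have "r mod 3 = 0 \<or> r mod 3 = 1 \<or> r mod 3 = 2"
    by linarith
  then have "r mod 3 div 2 + r mod 3 mod 2 = (r mod 3 + 2) div 3"
    by (elim disjE) simp_all
  then have "grd [1, 2, 3] r = r div 3 + (r mod 3 + 2) div 3"
    by (simp add: grd_def)
  also have "\<dots> = (r + 2) div 3"
    using div_add1_eq[of r 2 3] by simp
  finally show ?thesis .
qed

definition grd_residue :: "nat \<Rightarrow> nat \<Rightarrow> nat" where
  "grd_residue c r = (if r < c then (r + 2) div 3 else if r = c then 1 else 1 + (r - c + 1) div 3)"

lemma grd_residue_eq:
  assumes "r < 2 * c"
  shows "grd [1, 2, 3, c, c + 1] r = grd_residue c r"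
proof -
  have grd_4: "grd [1, 2, 3, c] u = u div c + (u mod c + 2) div 3" for u
    using grd_snoc[of "[1, 2, 3]" c u] grd_1_2_3[of "u mod c"] by simp
  have grd_5: "grd [1, 2, 3, c, c + 1] r = r div (c + 1) + grd [1, 2, 3, c] (r mod (c + 1))"
    using grd_snoc[of "[1, 2, 3, c]" "c + 1" r] by simp
  consider "r < c" | "r = c" | "c < r"
    by linarith
  then show ?thesis
  proof cases
    case 1
    then show ?thesis
      unfolding grd_5 grd_4 grd_residue_def by simp
  next
    case 2
    then show ?thesis
      unfolding grd_5 grd_4 grd_residue_def using assms by simp
  next
    case 3
    then have "r div (c + 1) = 1" "r mod (c + 1) = r - c - 1" "r - c - 1 < c"
      using assms by (simp_all add: le_div_geq le_mod_geq)
    then show ?thesis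
      unfolding grd_5 grd_4 grd_residue_def using 3 by simp
  qed
qed

lemma grd_residue_add:
  assumes "4 < c" "d \<in> {1, 2, 3, c, c + 1}" "r + d < 2 * c"
  shows "grd_residue c (r + d) \<le> grd_residue c r + 1"
  using assms unfolding grd_residue_def by (auto split: if_splits)

lemma grd_residue_wrap:
  assumes "4 < c" "r < 2 * c" "d \<in> {1, 2, 3, c, c + 1}" "2 * c \<le> r + d"
  shows "grd_residue c (r + d - 2 * c) \<le> grd_residue c r"
  using assms unfolding grd_residue_def by (auto split: if_splits)

lemma grd_coin_step_residue:
  assumes "4 < c" "r < 2 * c" "d \<in> set [1, 2, 3, c, c + 1, 2 * c]"
  shows "grd [1, 2, 3, c, c + 1, 2 * c] (r + d) \<le> grd [1, 2, 3, c, c + 1, 2 * c] r + 1"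
proof -
  have grd_6: "grd [1, 2, 3, c, c + 1, 2 * c] u = u div (2 * c) + grd [1, 2, 3, c, c + 1] (u mod (2 * c))"
    for u
    using grd_snoc[of "[1, 2, 3, c, c + 1]" "2 * c" u] by simp
  have r: "grd [1, 2, 3, c, c + 1, 2 * c] r = grd_residue c r"
    unfolding grd_6 using assms(2) grd_residue_eq[of r c] by simp
  consider "d = 2 * c" | "d \<in> {1, 2, 3, c, c + 1}" "r + d < 2 * c"
    | "d \<in> {1, 2, 3, c, c + 1}" "2 * c \<le> r + d"
    using assms(3) by force
  then show ?thesis
  proof cases
    case 1
    then have "(r + d) div (2 * c) = 1" "(r + d) mod (2 * c) = r"
      using assms(1,2) by (auto simp: le_div_geq le_mod_geq)
    then show ?thesis
      unfolding grd_6[of "r + d"] r using assms(2) grd_residue_eq[of r c] by simp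
  next
    case 2
    then show ?thesis
      unfolding grd_6[of "r + d"] r
      using grd_residue_add[OF assms(1) 2] grd_residue_eq[of "r + d" c] 2 by simp
  next
    case 3
    then have "r + d - 2 * c < 2 * c" "(r + d) div (2 * c) = 1" "(r + d) mod (2 * c) = r + d - 2 * c"
      using assms by (auto simp: le_div_geq le_mod_geq)
    then show ?thesis
      unfolding grd_6[of "r + d"] r
      using grd_residue_wrap[OF assms(1,2) 3] grd_residue_eq[of "r + d - 2 * c" c] by simp
  qed
qed

lemma grd_coin_step:
  assumes "4 < c" "d \<in> set [1, 2, 3, c, c + 1, 2 * c]"
  shows "grd [1, 2, 3, c, c + 1, 2 * c] (w + d) \<le> grd [1, 2, 3, c, c + 1, 2 * c] w + 1"
proof -
  have "grd ([1, 2, 3, c, c + 1] @ [2 * c]) (r + d) \<le> grd ([1, 2, 3, c, c + 1] @ [2 * c]) r + 1"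
    if "r < 2 * c" for r
    using grd_coin_step_residue[OF assms(1) that assms(2)] by simp
  then show ?thesis
    using grd_coin_step_from_residues[of "2 * c" "[1, 2, 3, c, c + 1]" d w] assms(1) by simp
qed

lemma grd_1_2_3_c_c_plus_1_double:
  assumes "0 < c"
  shows "grd [1, 2, 3, c, c + 1] (2 * c) = 1 + (c + 1) div 3"
  using grd_snoc[of "[1, 2, 3, c]" "c + 1" "2 * c"] grd_snoc[of "[1, 2, 3]" c "c - 1"]
    grd_1_2_3[of "c - 1"] assms
  by (simp add: le_div_geq le_mod_geq)

theorem lemma11:
  fixes c4 :: nat
  assumes "c4 > 4"
  shows "is_system [1, 2, 3, c4, c4 + 1, 2 * c4]
    \<and> canonical [1, 2, 3, c4, c4 + 1, 2 * c4]
    \<and> noncanonical [1, 2, 3, c4, c4 + 1]"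
proof (intro conjI)
  show system: "is_system [1, 2, 3, c4, c4 + 1, 2 * c4]"
    using assms unfolding is_system_def by simp
  then show "canonical [1, 2, 3, c4, c4 + 1, 2 * c4]"
    using canonical_if_grd_coin_step grd_coin_step[OF assms] by blast
  have "represents [1, 2, 3, c4, c4 + 1] (2 * c4) [0, 0, 0, 2, 0]"
    by (simp add: represents_def numeral_eq_Suc)
  moreover have "sum_list [0, 0, 0, 2, 0] < grd [1, 2, 3, c4, c4 + 1] (2 * c4)"
    using grd_1_2_3_c_c_plus_1_double[of c4] assms by simp
  ultimately show "noncanonical [1, 2, 3, c4, c4 + 1]"
    using noncanonical_if_represents assms by simp
qed

end
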